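(* There are absolute constants $B_0$ and $M$ such that the following holds. Let $k,k'$ be integers with $1\le k\le k'\le k+10$, and let $u_1=e^{ikx}e^{-k^2t}$, $u_2=e^{ik'y}e^{-(k')^2t}$, both solutions of $\dot u=\Delta u$. There exist a $C^2$ complex function $u$ and a continuous vector field $B$ with values in $\mathbb{C}^2$, $|B|\le B_0$, on $\mathbb{T}^2\times[0,\frac7{2k}]$, such that $\dot u=\Delta u+B\cdot\nabla u$ there, and: for $t\in[0,\frac1{2k}]$, $u=u_1$ and $B=0$; for $t\in[\frac3k,\frac7{2k}]$, $u=u_2$ and $B=0$; and for $t\in[0,\frac7{2k}]$, $u=f(t)e^{ikx}+g(t)e^{ik'y}$ with $f,g\in C^2$ satisfying, for $0\le\alpha\le2$, $|f^{(\alpha)}(t)|\le Mk^{2\alpha}e^{-k^2t}$ and $|g^{(\alpha)}(t)|\le M(k')^{2\alpha}e^{-(k')^2t}$.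
   Context: $\mathbb{T}^2=(\mathbb{R}/2\pi\mathbb{Z})^2$ with coordinates $(x,y)$; $t$ the third coordinate; $\dot u=\partial_tu$; $\Delta$ and $\nabla$ are in the spatial variables $(x,y)$, and $B\cdot\nabla u=B_1\partial_xu+B_2\partial_yu$. *)

theory Defs
  imports "HOL-Analysis.Analysis"
begin

definition C2_on :: "'a::real_normed_vector set \<Rightarrow> ('a \<Rightarrow> 'b::real_normed_vector) \<Rightarrow> bool" where
  "C2_on S f \<longleftrightarrow> (\<exists>D1 D2.
      (\<forall>p\<in>S. (f has_derivative blinfun_apply (D1 p)) (at p within S)) \<and>
      (\<forall>p\<in>S. (D1 has_derivative blinfun_apply (D2 p)) (at p within S)) \<and>
      continuous_on S D2)"

text \<open>Functions on T^2 x [0,T] are represented as 2pi-periodic functions u x y t.\<close>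
definition periodic2 :: "(real \<Rightarrow> real \<Rightarrow> real \<Rightarrow> 'b) \<Rightarrow> bool" where
  "periodic2 u \<longleftrightarrow> (\<forall>x y t. u (x + 2*pi) y t = u x y t \<and> u x (y + 2*pi) t = u x y t)"

definition pdx :: "(real \<Rightarrow> real \<Rightarrow> real \<Rightarrow> complex) \<Rightarrow> real \<Rightarrow> real \<Rightarrow> real \<Rightarrow> complex" where
  "pdx u x y t = vector_derivative (\<lambda>s. u s y t) (at x)"

definition pdy :: "(real \<Rightarrow> real \<Rightarrow> real \<Rightarrow> complex) \<Rightarrow> real \<Rightarrow> real \<Rightarrow> real \<Rightarrow> complex" where
  "pdy u x y t = vector_derivative (\<lambda>s. u x s t) (at y)"

definition pdt :: "real \<Rightarrow> (real \<Rightarrow> real \<Rightarrow> real \<Rightarrow> complex) \<Rightarrow> real \<Rightarrow> real \<Rightarrow> real \<Rightarrow> complex" where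
  "pdt T u x y t = vector_derivative (\<lambda>s. u x y s) (at t within {0..T})"

definition lap :: "(real \<Rightarrow> real \<Rightarrow> real \<Rightarrow> complex) \<Rightarrow> real \<Rightarrow> real \<Rightarrow> real \<Rightarrow> complex" where
  "lap u x y t = pdx (pdx u) x y t + pdy (pdy u) x y t"

definition dT :: "real \<Rightarrow> (real \<Rightarrow> complex) \<Rightarrow> real \<Rightarrow> complex" where
  "dT T h = (\<lambda>s. vector_derivative h (at s within {0..T}))"

end

theory Submission
  imports Defs
begin

(*
  The transition never mixes the two modes: u = f(t) e^(ikx) + g(t) e^(ik'y) with
  f = a(t) e^(-k^2 t) and g = b(t) e^(-k'^2 t), where b rises from 0 to 1 while kt runs through
  [1/2, 3/2] and a falls from 1 to 0 while kt runs through [3/2, 5/2]; both ramps are rescaled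
  copies of the quintic smoothstep, which is C^2 with derivatives bounded by 2 and 15.
  Then u_t - Lap u = a' e^(-k^2 t) e^(ikx) + b' e^(-k'^2 t) e^(ik'y), and each term is produced
  by the drift acting on the other mode: B_1 u_x gives the b'-term and B_2 u_y the a'-term.
  Dividing by the other mode's coefficient is harmless, since f is exactly e^(-k^2 t) wherever
  b' is nonzero and g is exactly e^(-k'^2 t) wherever a' is nonzero. The drift stays bounded
  because the time interval has length 7/(2k) and k' <= k + 10, so the ratio
  e^((k'^2 - k^2) t) never exceeds e^420.
*)

lemma has_real_derivative_if_le:
  fixes F G :: "real \<Rightarrow> real"
  assumes "\<And>x. (F has_real_derivative F' x) (at x)" "\<And>x. (G has_real_derivative G' x) (at x)"
    and "F c = G c" "F' c = G' c"
  shows "((\<lambda>x. if x \<le> c then F x else G x) has_real_derivative (if x \<le> c then F' x else G' x)) (at x)"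
proof -
  have "((\<lambda>x. if x \<in> {..c} then F x else G x) has_vector_derivative
      (if x \<in> {..c} then F' x else G' x)) (at x within UNIV)"
    by (rule has_vector_derivative_If_within_closures[where T = "{c<..}"])
      (use assms in \<open>auto simp: has_real_derivative_iff_has_vector_derivative[symmetric]
         intro: has_field_derivative_at_within\<close>)
  then show ?thesis
    by (simp add: has_real_derivative_iff_has_vector_derivative)
qed

definition smoothstep :: "real \<Rightarrow> real" where
  "smoothstep z = (if z \<le> 0 then 0 else if z \<le> 1 then 10*z^3 - 15*z^4 + 6*z^5 else 1)"

definition smoothstep' :: "real \<Rightarrow> real" where
  "smoothstep' z = (if z \<le> 0 then 0 else if z \<le> 1 then 30*z^2 - 60*z^3 + 30*z^4 else 0)"

definition smoothstep'' :: "real \<Rightarrow> real" where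
  "smoothstep'' z = (if z \<le> 0 then 0 else if z \<le> 1 then 60*z - 180*z^2 + 120*z^3 else 0)"

lemma smoothstep_has_real_derivative: "(smoothstep has_real_derivative smoothstep' z) (at z)"
proof -
  have "((\<lambda>z. if z \<le> 1 then 10*z^3 - 15*z^4 + 6*z^5 else 1) has_real_derivative
      (if z \<le> 1 then 30*z^2 - 60*z^3 + 30*z^4 else 0)) (at z)" for z
    by (rule has_real_derivative_if_le) (auto intro!: derivative_eq_intros)
  then show ?thesis
    unfolding smoothstep_def[abs_def] smoothstep'_def
    by (intro has_real_derivative_if_le) (auto intro!: derivative_eq_intros)
qed

lemma smoothstep'_has_real_derivative: "(smoothstep' has_real_derivative smoothstep'' z) (at z)"
proof -
  have "((\<lambda>z. if z \<le> 1 then 30*z^2 - 60*z^3 + 30*z^4 else 0) has_real_derivative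
      (if z \<le> 1 then 60*z - 180*z^2 + 120*z^3 else 0)) (at z)" for z
    by (rule has_real_derivative_if_le) (auto intro!: derivative_eq_intros)
  then show ?thesis
    unfolding smoothstep'_def[abs_def] smoothstep''_def
    by (intro has_real_derivative_if_le) (auto intro!: derivative_eq_intros)
qed

lemma continuous_on_smoothstep'': "continuous_on UNIV smoothstep''"
  unfolding smoothstep''_def[abs_def]
  by (intro continuous_on_cases_le[where h = "\<lambda>z. z"] continuous_intros) auto

lemma smoothstep_eq_0: "z \<le> 0 \<Longrightarrow> smoothstep z = 0"
  and smoothstep_eq_1: "1 \<le> z \<Longrightarrow> smoothstep z = 1"
  and smoothstep'_eq_0: "z \<le> 0 \<or> 1 \<le> z \<Longrightarrow> smoothstep' z = 0"
  by (auto simp: smoothstep_def smoothstep'_def)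

lemma smoothstep_bounds: "0 \<le> smoothstep z" "smoothstep z \<le> 1" "\<bar>smoothstep' z\<bar> \<le> 2" "\<bar>smoothstep'' z\<bar> \<le> 15"
proof -
  have "0 \<le> 10*z^3 - 15*z^4 + 6*z^5 \<and> 10*z^3 - 15*z^4 + 6*z^5 \<le> 1 \<and>
    \<bar>30*z^2 - 60*z^3 + 30*z^4\<bar> \<le> 2 \<and> \<bar>60*z - 180*z^2 + 120*z^3\<bar> \<le> 15" if "0 \<le> z" "z \<le> 1"
  proof (intro conjI)
    define q where "q = z * (1 - z)"
    have "q = 1/4 - (z - 1/2)^2"
      by (simp add: q_def power2_eq_square algebra_simps)
    then have "q \<le> 1/4"
      by simp
    moreover have "0 \<le> q"
      using that by (simp add: q_def)
    ultimately have q: "0 \<le> q" "q \<le> 1/4"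
      by auto
    have "0 \<le> z^3 * (6 * (z - 5/4)^2 + 5/8)"
      using that by simp
    then show "0 \<le> 10*z^3 - 15*z^4 + 6*z^5"
      by (simp add: algebra_simps power2_eq_square power_def)
    have "0 \<le> (1 - z)^3 * (1 + 3*z + 6*z^2)"
      using that by simp
    then show "10*z^3 - 15*z^4 + 6*z^5 \<le> 1"
      by (simp add: algebra_simps power2_eq_square power_def)
    have "30*z^2 - 60*z^3 + 30*z^4 = 30 * q^2"
      by (simp add: q_def algebra_simps power2_eq_square power_def)
    moreover have "q^2 \<le> (1/4)^2"
      using q by (intro power_mono) auto
    ultimately show "\<bar>30*z^2 - 60*z^3 + 30*z^4\<bar> \<le> 2"
      by (simp add: power2_eq_square)
    have "60*z - 180*z^2 + 120*z^3 = 60 * (q * (1 - 2*z))"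
      by (simp add: q_def algebra_simps power2_eq_square power_def)
    moreover have "\<bar>q * (1 - 2*z)\<bar> \<le> 1/4 * 1"
      unfolding abs_mult using q that by (intro mult_mono) auto
    ultimately show "\<bar>60*z - 180*z^2 + 120*z^3\<bar> \<le> 15"
      by simp
  qed
  then show "0 \<le> smoothstep z" "smoothstep z \<le> 1" "\<bar>smoothstep' z\<bar> \<le> 2" "\<bar>smoothstep'' z\<bar> \<le> 15"
    by (auto simp: smoothstep_def smoothstep'_def smoothstep''_def)
qed

lemma C2_on_of_vector_derivatives:
  fixes F :: "real \<Rightarrow> 'a::real_normed_vector"
  assumes F': "\<And>t. (F has_vector_derivative F' t) (at t)"
    and F'': "\<And>t. (F' has_vector_derivative F'' t) (at t)"
    and "continuous_on UNIV F''"
  shows "C2_on S F"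
  unfolding C2_on_def
proof (intro exI conjI ballI)
  fix t
  show "(F has_derivative blinfun_scaleR_left (F' t)) (at t within S)"
    using F' by (auto simp: has_vector_derivative_def intro: has_derivative_at_withinI)
  have "((\<lambda>t. blinfun_scaleR_left (F' t)) has_derivative (\<lambda>v. blinfun_scaleR_left (v *\<^sub>R F'' t))) (at t)"
    using bounded_linear.has_derivative[OF bounded_linear_blinfun_scaleR_left F''[unfolded has_vector_derivative_def]] .
  moreover have "(\<lambda>v. blinfun_scaleR_left (v *\<^sub>R F'' t)) = blinfun_scaleR_left (blinfun_scaleR_left (F'' t))"
    by (intro ext blinfun_eqI) (simp add: blinfun.scaleR_left)
  ultimately show "((\<lambda>t. blinfun_scaleR_left (F' t)) has_derivative
      blinfun_scaleR_left (blinfun_scaleR_left (F'' t))) (at t within S)"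
    by (auto intro: has_derivative_at_withinI)
next
  show "continuous_on S (\<lambda>t. blinfun_scaleR_left (blinfun_scaleR_left (F'' t)))"
    by (intro continuous_intros continuous_on_subset[OF assms(3)]) auto
qed

lemma C2_on_add:
  assumes "C2_on S f" "C2_on S g"
  shows "C2_on S (\<lambda>w. f w + g w)"
proof -
  obtain f1 f2 where f: "\<forall>p\<in>S. (f has_derivative blinfun_apply (f1 p)) (at p within S)"
    "\<forall>p\<in>S. (f1 has_derivative blinfun_apply (f2 p)) (at p within S)" "continuous_on S f2"
    using assms(1) unfolding C2_on_def by blast
  obtain g1 g2 where g: "\<forall>p\<in>S. (g has_derivative blinfun_apply (g1 p)) (at p within S)"
    "\<forall>p\<in>S. (g1 has_derivative blinfun_apply (g2 p)) (at p within S)" "continuous_on S g2"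
    using assms(2) unfolding C2_on_def by blast
  show ?thesis
    unfolding C2_on_def
  proof (intro exI[of _ "\<lambda>p. f1 p + g1 p"] exI[of _ "\<lambda>p. f2 p + g2 p"] conjI ballI)
    fix p assume "p \<in> S"
    then show "((\<lambda>w. f w + g w) has_derivative blinfun_apply (f1 p + g1 p)) (at p within S)"
      and "((\<lambda>p. f1 p + g1 p) has_derivative blinfun_apply (f2 p + g2 p)) (at p within S)"
      using f g by (auto intro!: has_derivative_eq_rhs[OF has_derivative_add] simp: blinfun.add_left fun_eq_iff)
  qed (rule continuous_on_add[OF f(3) g(3)])
qed

text \<open>The derivative of \<open>\<lambda>w. P (L w)\<close> at \<open>w\<close> is \<open>blinfun_outer L (P' (L w))\<close>.\<close>
definition blinfun_outer :: "('a::real_normed_vector \<Rightarrow>\<^sub>L real) \<Rightarrow> 'b::real_normed_vector \<Rightarrow>\<^sub>L ('a \<Rightarrow>\<^sub>L 'b)" where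
  "blinfun_outer L = Blinfun (\<lambda>c. blinfun_scaleR_left c o\<^sub>L L)"

lemma blinfun_outer_apply [simp]: "blinfun_outer L c v = L v *\<^sub>R c"
proof -
  have bl: "bounded_linear (\<lambda>c. blinfun_scaleR_left c o\<^sub>L L)"
    by (rule bounded_linear_compose[OF bounded_bilinear.bounded_linear_left[OF bounded_bilinear_blinfun_compose]
          bounded_linear_blinfun_scaleR_left])
  then show ?thesis
    by (simp add: blinfun_outer_def bounded_linear_Blinfun_apply[OF bl])
qed

lemma has_derivative_mult_blinfun_comp:
  fixes P Q :: "real \<Rightarrow> 'b::real_normed_algebra" and L1 L2 :: "'a::real_normed_vector \<Rightarrow>\<^sub>L real"
  assumes "(P has_vector_derivative P') (at (L1 w))" "(Q has_vector_derivative Q') (at (L2 w))"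
  shows "((\<lambda>w. P (L1 w) * Q (L2 w)) has_derivative
     blinfun_outer L1 (P' * Q (L2 w)) + blinfun_outer L2 (P (L1 w) * Q')) (at w)"
proof -
  have "((\<lambda>w. P (L1 w)) has_derivative (\<lambda>v. L1 v *\<^sub>R P')) (at w)"
    and "((\<lambda>w. Q (L2 w)) has_derivative (\<lambda>v. L2 v *\<^sub>R Q')) (at w)"
    using assms[unfolded has_vector_derivative_def]
    by (auto intro!: has_derivative_compose[OF bounded_linear_imp_has_derivative[OF blinfun.bounded_linear_right]])
  from has_derivative_mult[OF this] show ?thesis
    by (rule has_derivative_eq_rhs) (simp add: fun_eq_iff blinfun.add_left algebra_simps)
qed

lemma C2_on_mult_blinfun_comp:
  fixes p q :: "real \<Rightarrow> 'b::real_normed_algebra" and L1 L2 :: "'a::real_normed_vector \<Rightarrow>\<^sub>L real"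
  assumes p': "\<And>t. (p has_vector_derivative p' t) (at t)"
    and p'': "\<And>t. (p' has_vector_derivative p'' t) (at t)" and "continuous_on UNIV p''"
    and q': "\<And>t. (q has_vector_derivative q' t) (at t)"
    and q'': "\<And>t. (q' has_vector_derivative q'' t) (at t)" and "continuous_on UNIV q''"
  shows "C2_on S (\<lambda>w. p (L1 w) * q (L2 w))"
  unfolding C2_on_def
proof (intro exI conjI ballI)
  let ?D1 = "\<lambda>w. blinfun_outer L1 (p' (L1 w) * q (L2 w)) + blinfun_outer L2 (p (L1 w) * q' (L2 w))"
  let ?M1 = "\<lambda>w. blinfun_outer L1 (p'' (L1 w) * q (L2 w)) + blinfun_outer L2 (p' (L1 w) * q' (L2 w))"
  let ?M2 = "\<lambda>w. blinfun_outer L1 (p' (L1 w) * q' (L2 w)) + blinfun_outer L2 (p (L1 w) * q'' (L2 w))"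
  fix w
  show "((\<lambda>w. p (L1 w) * q (L2 w)) has_derivative ?D1 w) (at w within S)"
    by (rule has_derivative_at_withinI[OF has_derivative_mult_blinfun_comp[OF p' q']])
  have "(?D1 has_derivative (\<lambda>v. blinfun_outer L1 (?M1 w v) + blinfun_outer L2 (?M2 w v))) (at w)"
    by (intro has_derivative_add bounded_linear.has_derivative[OF blinfun.bounded_linear_right]
        has_derivative_mult_blinfun_comp p' p'' q' q'')
  then have "(?D1 has_derivative (blinfun_outer L1 o\<^sub>L ?M1 w) + (blinfun_outer L2 o\<^sub>L ?M2 w)) (at w)"
    by (rule has_derivative_eq_rhs) (simp add: fun_eq_iff blinfun.add_left)
  then show "(?D1 has_derivative (blinfun_outer L1 o\<^sub>L ?M1 w) + (blinfun_outer L2 o\<^sub>L ?M2 w)) (at w within S)"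
    by (rule has_derivative_at_withinI)
next
  have "continuous_on UNIV F" if "\<And>t. (F has_vector_derivative F' t) (at t)" for F F' :: "real \<Rightarrow> 'b"
    using that by (meson continuous_at_imp_continuous_on has_vector_derivative_continuous)
  then have "continuous_on UNIV p" "continuous_on UNIV p'" "continuous_on UNIV q" "continuous_on UNIV q'"
    using p' p'' q' q'' by blast+
  note global = this assms(3,6)
  have "continuous_on S (\<lambda>w. F (L w))" if "continuous_on UNIV F" for F and L :: "'a \<Rightarrow>\<^sub>L real"
    by (rule continuous_on_compose2[OF that]) (auto intro: continuous_intros)
  note local = this[OF global(1)] this[OF global(2)] this[OF global(3)] this[OF global(4)]
    this[OF global(5)] this[OF global(6)]
  then show "continuous_on S (\<lambda>w.
      (blinfun_outer L1 o\<^sub>L (blinfun_outer L1 (p'' (L1 w) * q (L2 w)) + blinfun_outer L2 (p' (L1 w) * q' (L2 w)))) +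
      (blinfun_outer L2 o\<^sub>L (blinfun_outer L1 (p' (L1 w) * q' (L2 w)) + blinfun_outer L2 (p (L1 w) * q'' (L2 w)))))"
    by (intro continuous_intros local)
qed

definition wave :: "real \<Rightarrow> real \<Rightarrow> complex" where
  "wave c x = exp (\<i> * of_real (c * x))"

lemma wave_has_vector_derivative: "(wave c has_vector_derivative \<i> * c * wave c x) (at x)"
proof -
  have "((\<lambda>z. exp (\<i> * c * z)) has_field_derivative \<i> * c * exp (\<i> * c * of_real x)) (at (of_real x))"
    by (auto intro!: derivative_eq_intros)
  from has_vector_derivative_real_field[OF this] show ?thesis
    by (simp add: wave_def[abs_def] mult.assoc)
qed

lemma wave'_has_vector_derivative: "((\<lambda>x. \<i> * c * wave c x) has_vector_derivative (\<i> * c)^2 * wave c x) (at x)"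
  using has_vector_derivative_mult_right[OF wave_has_vector_derivative, of "\<i> * c"]
  by (simp add: power2_eq_square mult.assoc)

lemma continuous_on_wave'': "continuous_on UNIV (\<lambda>x. (\<i> * c)^2 * wave c x)"
  unfolding wave_def by (intro continuous_intros)

lemma norm_wave [simp]: "norm (wave c x) = 1"
  unfolding wave_def by (rule norm_exp_i_times)

lemma wave_uminus_mult: "wave (-c) x * wave c x = 1"
  unfolding wave_def by (simp add: exp_add[symmetric])

lemma wave_periodic: "wave (of_int n) (x + 2*pi) = wave (of_int n) x"
proof -
  have "wave (of_int n) (x + 2*pi) = wave (of_int n) x * exp ((2 * of_int n * pi) * \<i>)"
    unfolding wave_def by (simp add: exp_add[symmetric] algebra_simps)
  also have "exp ((2 * of_int n * pi) * \<i>) = 1"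
    by (rule exp_integer_2pi) simp
  finally show ?thesis
    by simp
qed

lemma pdx_wave:
  "pdx (\<lambda>x y t. F y t * wave c x + G y t) = (\<lambda>x y t. F y t * (\<i> * c * wave c x))"
proof (intro ext)
  fix x y t
  have "((\<lambda>s. F y t * wave c s + G y t) has_vector_derivative F y t * (\<i> * c * wave c x) + 0) (at x)"
    by (intro derivative_intros has_vector_derivative_mult_right wave_has_vector_derivative)
  then show "pdx (\<lambda>x y t. F y t * wave c x + G y t) x y t = F y t * (\<i> * c * wave c x)"
    unfolding pdx_def by (simp add: vector_derivative_at)
qed

lemma pdy_wave:
  "pdy (\<lambda>x y t. F x t + G x t * wave c y) = (\<lambda>x y t. G x t * (\<i> * c * wave c y))"
proof (intro ext)
  fix x y t
  have "((\<lambda>s. F x t + G x t * wave c s) has_vector_derivative 0 + G x t * (\<i> * c * wave c y)) (at y)"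
    by (intro derivative_intros has_vector_derivative_mult_right wave_has_vector_derivative)
  then show "pdy (\<lambda>x y t. F x t + G x t * wave c y) x y t = G x t * (\<i> * c * wave c y)"
    unfolding pdy_def by (simp add: vector_derivative_at)
qed

lemma lap_waves:
  "lap (\<lambda>x y t. f t * wave c x + g t * wave c' y) x y t =
     - (of_real (c^2) * f t * wave c x + of_real (c'^2) * g t * wave c' y)"
proof -
  have "pdx (pdx (\<lambda>x y t. f t * wave c x + g t * wave c' y)) =
      (\<lambda>x y t. f t * (\<i> * c) * (\<i> * c * wave c x))"
    using pdx_wave[of "\<lambda>y t. f t * (\<i> * c)" c "\<lambda>y t. 0"]
    by (simp add: pdx_wave[of "\<lambda>y t. f t"] mult.assoc)
  moreover have "pdy (pdy (\<lambda>x y t. f t * wave c x + g t * wave c' y)) =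
      (\<lambda>x y t. g t * (\<i> * c') * (\<i> * c' * wave c' y))"
    using pdy_wave[of "\<lambda>x t. 0" "\<lambda>x t. g t * (\<i> * c')" c']
    by (simp add: pdy_wave[of _ "\<lambda>x t. g t"] mult.assoc)
  ultimately show ?thesis
    by (simp add: lap_def algebra_simps power2_eq_square)
qed

definition damped :: "real \<Rightarrow> (real \<Rightarrow> real) \<Rightarrow> real \<Rightarrow> complex" where
  "damped L A t = of_real (A t * exp (- L * t))"

lemma damped_has_vector_derivative:
  assumes "(A has_real_derivative A' t) (at t)"
  shows "(damped L A has_vector_derivative damped L (\<lambda>s. A' s - L * A s) t) (at t)"
  unfolding damped_def[abs_def]
  by (intro has_vector_derivative_of_real) (use assms in \<open>auto intro!: derivative_eq_intros simp: algebra_simps\<close>)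

lemma damped_vector_derivatives:
  assumes "\<And>t. (A has_real_derivative A' t) (at t)" "\<And>t. (A' has_real_derivative A'' t) (at t)"
  shows "(damped L A has_vector_derivative damped L (\<lambda>s. A' s - L * A s) t) (at t)"
    "(damped L (\<lambda>s. A' s - L * A s) has_vector_derivative
      damped L (\<lambda>s. A'' s - L * A' s - L * (A' s - L * A s)) t) (at t)"
  using assms by (auto intro!: damped_has_vector_derivative derivative_eq_intros)

lemma continuous_on_damped_second_derivative:
  assumes "\<And>t. (A has_real_derivative A' t) (at t)" "\<And>t. (A' has_real_derivative A'' t) (at t)"
    and "continuous_on UNIV A''"
  shows "continuous_on UNIV (damped L (\<lambda>s. A'' s - L * A' s - L * (A' s - L * A s)))"
proof -
  have "continuous_on UNIV A" "continuous_on UNIV A'"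
    using assms(1,2) by (meson continuous_at_imp_continuous_on DERIV_isCont)+
  with assms(3) show ?thesis
    unfolding damped_def[abs_def] by (intro continuous_intros)
qed

lemma dT_eq_vector_derivatives:
  assumes F': "\<And>t. (F has_vector_derivative F' t) (at t)"
    and F'': "\<And>t. (F' has_vector_derivative F'' t) (at t)"
    and "0 < T" "t \<in> {0..T}"
  shows "dT T F t = F' t" "dT T (dT T F) t = F'' t"
proof -
  have dT_F: "dT T F s = F' s" if "s \<in> {0..T}" for s
    unfolding dT_def using that \<open>0 < T\<close> by (auto intro!: vector_derivative_at_within_ivl[OF F'])
  then show "dT T F t = F' t"
    using assms(4) by blast
  have "(dT T F has_vector_derivative F'' t) (at t within {0..T})"
    by (rule has_vector_derivative_transform[OF assms(4) dT_F])
      (auto intro: has_vector_derivative_at_within[OF F''])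
  then show "dT T (dT T F) t = F'' t"
    unfolding dT_def[of T "dT T F"] using assms(3,4)
    by (metis vector_derivative_within_cbox cbox_interval)
qed

lemma norm_iterated_dT_damped_le:
  fixes R :: real
  assumes A': "\<And>t. (A has_real_derivative A' t) (at t)"
    and A'': "\<And>t. (A' has_real_derivative A'' t) (at t)"
    and "\<bar>A t\<bar> \<le> 1" "\<bar>A' t\<bar> \<le> 2 * R" "\<bar>A'' t\<bar> \<le> 15 * R^2" "1 \<le> R"
    and "0 < T" "t \<in> {0..T}" "\<alpha> \<le> 2"
  shows "norm ((dT T ^^ \<alpha>) (damped (R^2) A) t) \<le> 20 * R ^ (2 * \<alpha>) * exp (- (R^2) * t)"
proof -
  let ?L = "R^2"
  note dT = dT_eq_vector_derivatives[OF damped_vector_derivatives[OF A' A''] assms(7,8)]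
  have norm_damped_le: "norm (damped ?L B t) \<le> c * exp (- (R^2) * t)" if "\<bar>B t\<bar> \<le> c" for B c
    using that by (simp add: damped_def norm_mult mult_right_mono)
  have powers: "R \<le> R^2" "R^2 \<le> R^3" "R^3 \<le> R^4"
    using power_increasing[of 1 2 R] power_increasing[of 2 3 R] power_increasing[of 3 4 R] \<open>1 \<le> R\<close>
    by simp_all
  have "\<bar>?L * A t\<bar> \<le> R^2" "\<bar>?L * ?L * A t\<bar> \<le> R^4"
    using assms(3) by (auto simp: abs_mult mult_left_le power_add[symmetric])
  moreover have "\<bar>2 * ?L * A' t\<bar> \<le> 2 * ?L * (2 * R)"
    using mult_right_mono[OF assms(4), of ?L] by (simp add: abs_mult algebra_simps)
  moreover have "2 * ?L * (2 * R) = 4 * R^3"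
    by (simp add: power2_eq_square power3_eq_cube)
  ultimately have bounds: "\<bar>A t\<bar> \<le> 20" "\<bar>A' t - ?L * A t\<bar> \<le> 20 * R^2"
    "\<bar>A'' t - ?L * A' t - ?L * (A' t - ?L * A t)\<bar> \<le> 20 * R^4"
    using assms(3-6) powers by (auto simp: algebra_simps)
  have "norm (damped ?L A t) \<le> 20 * R^(2*0) * exp (- (R^2) * t)"
    using norm_damped_le[of A, OF bounds(1)] by simp
  moreover have "norm (dT T (damped ?L A) t) \<le> 20 * R^(2*1) * exp (- (R^2) * t)"
    using norm_damped_le[of "\<lambda>s. A' s - ?L * A s", OF bounds(2)] by (simp add: dT)
  moreover have "norm (dT T (dT T (damped ?L A)) t) \<le> 20 * R^(2*2) * exp (- (R^2) * t)"
    using norm_damped_le[of "\<lambda>s. A'' s - ?L * A' s - ?L * (A' s - ?L * A s)", OF bounds(3)] by (simp add: dT)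
  moreover have "\<alpha> = 0 \<or> \<alpha> = 1 \<or> \<alpha> = 2"
    using \<open>\<alpha> \<le> 2\<close> by auto
  moreover have "dT T ^^ 2 = dT T \<circ> dT T"
    by (simp add: numeral_2_eq_2)
  ultimately show ?thesis
    by auto
qed

lemma smoothstep_ramp_has_real_derivative:
  "((\<lambda>t. smoothstep (r * t - c)) has_real_derivative r * smoothstep' (r * t - c)) (at t)"
  "((\<lambda>t. smoothstep' (r * t - c)) has_real_derivative r * smoothstep'' (r * t - c)) (at t)"
proof -
  have "((\<lambda>t. r * t - c) has_real_derivative r) (at t)"
    by (auto intro!: derivative_eq_intros)
  from DERIV_chain2[OF smoothstep_has_real_derivative this] DERIV_chain2[OF smoothstep'_has_real_derivative this]
  show "((\<lambda>t. smoothstep (r * t - c)) has_real_derivative r * smoothstep' (r * t - c)) (at t)"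
    "((\<lambda>t. smoothstep' (r * t - c)) has_real_derivative r * smoothstep'' (r * t - c)) (at t)"
    by (simp_all add: mult.commute)
qed

lemma continuous_on_smoothstep''_ramp: "continuous_on UNIV (\<lambda>t. smoothstep'' (r * t - c))"
  by (rule continuous_on_compose2[OF continuous_on_smoothstep'']) (auto intro!: continuous_intros)

lemma exp_ratio_cancel:
  fixes A B a b c t :: real
  assumes "A * B = B" "c \<noteq> 0"
  shows "B * exp ((a - b) * t) / c * c * (A * exp (- a * t)) = B * exp (- b * t)"
  using assms by (simp add: exp_add[symmetric] algebra_simps)

locale heat_transition =
  fixes k k' :: int
  assumes one_le_k: "1 \<le> k" and k_le_k': "k \<le> k'" and k'_le: "k' \<le> k + 10"
begin

abbreviation \<kappa> :: real where "\<kappa> \<equiv> real_of_int k"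
abbreviation \<kappa>' :: real where "\<kappa>' \<equiv> real_of_int k'"

lemma kappa_bounds: "1 \<le> \<kappa>" "\<kappa> \<le> \<kappa>'" "\<kappa>' \<le> \<kappa> + 10"
  using one_le_k k_le_k' k'_le by simp_all

lemma kappa_nonzero: "\<kappa> \<noteq> 0" "\<kappa>' \<noteq> 0"
  using kappa_bounds by auto

definition T :: real where "T = 7 / (2 * \<kappa>)"

lemma T_pos: "0 < T"
  using kappa_bounds by (simp add: T_def)

definition fade_in :: "real \<Rightarrow> real" where "fade_in t = smoothstep (\<kappa> * t - 1/2)"
definition fade_in' :: "real \<Rightarrow> real" where "fade_in' t = \<kappa> * smoothstep' (\<kappa> * t - 1/2)"
definition fade_out :: "real \<Rightarrow> real" where "fade_out t = 1 - smoothstep (\<kappa> * t - 3/2)"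
definition fade_out' :: "real \<Rightarrow> real" where "fade_out' t = - (\<kappa> * smoothstep' (\<kappa> * t - 3/2))"
definition fade_in'' :: "real \<Rightarrow> real" where "fade_in'' t = \<kappa>^2 * smoothstep'' (\<kappa> * t - 1/2)"
definition fade_out'' :: "real \<Rightarrow> real" where "fade_out'' t = - (\<kappa>^2 * smoothstep'' (\<kappa> * t - 3/2))"

lemma fade_in_has_real_derivative: "(fade_in has_real_derivative fade_in' t) (at t)"
  and fade_in'_has_real_derivative: "(fade_in' has_real_derivative fade_in'' t) (at t)"
  and fade_out_has_real_derivative: "(fade_out has_real_derivative fade_out' t) (at t)"
  and fade_out'_has_real_derivative: "(fade_out' has_real_derivative fade_out'' t) (at t)"
  unfolding fade_in_def[abs_def] fade_in'_def[abs_def] fade_out_def[abs_def] fade_out'_def[abs_def]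
    fade_in''_def fade_out''_def
  by (auto intro!: derivative_eq_intros smoothstep_ramp_has_real_derivative simp: power2_eq_square)

lemma fade_bounds:
  "\<bar>fade_in t\<bar> \<le> 1" "\<bar>fade_in' t\<bar> \<le> 2 * \<kappa>'" "\<bar>fade_in'' t\<bar> \<le> 15 * \<kappa>'^2"
  "\<bar>fade_out t\<bar> \<le> 1" "\<bar>fade_out' t\<bar> \<le> 2 * \<kappa>" "\<bar>fade_out'' t\<bar> \<le> 15 * \<kappa>^2"
proof -
  note ramp1 = smoothstep_bounds[of "\<kappa> * t - 1/2"] and ramp3 = smoothstep_bounds[of "\<kappa> * t - 3/2"]
  have "\<kappa> * \<kappa> \<le> \<kappa>' * \<kappa>'"
    using kappa_bounds by (intro mult_mono) auto
  note kappa = kappa_bounds this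
  show "\<bar>fade_in t\<bar> \<le> 1" "\<bar>fade_out t\<bar> \<le> 1"
    using ramp1 ramp3 by (simp_all add: fade_in_def fade_out_def)
  show "\<bar>fade_in' t\<bar> \<le> 2 * \<kappa>'"
    using mult_mono[OF kappa(2) ramp1(3)] kappa by (simp add: fade_in'_def abs_mult mult.commute)
  show "\<bar>fade_out' t\<bar> \<le> 2 * \<kappa>"
    using mult_left_mono[OF ramp3(3), of \<kappa>] kappa by (simp add: fade_out'_def abs_mult mult.commute)
  show "\<bar>fade_in'' t\<bar> \<le> 15 * \<kappa>'^2"
    using mult_mono[OF kappa(4) ramp1(4)] kappa by (simp add: fade_in''_def abs_mult power2_eq_square mult_ac)
  show "\<bar>fade_out'' t\<bar> \<le> 15 * \<kappa>^2"
    using mult_left_mono[OF ramp3(4), of "\<kappa> * \<kappa>"] kappa by (simp add: fade_out''_def abs_mult power2_eq_square mult_ac)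
qed

lemma fade_out_mult_fade_in': "fade_out t * fade_in' t = fade_in' t"
  by (cases "\<kappa> * t \<le> 3/2") (auto simp: fade_out_def fade_in'_def smoothstep_eq_0 smoothstep'_eq_0)

lemma fade_in_mult_fade_out': "fade_in t * fade_out' t = fade_out' t"
  by (cases "\<kappa> * t \<le> 3/2") (auto simp: fade_out'_def fade_in_def smoothstep_eq_1 smoothstep'_eq_0)

definition f :: "real \<Rightarrow> complex" where "f = damped (\<kappa>^2) fade_out"
definition g :: "real \<Rightarrow> complex" where "g = damped (\<kappa>'^2) fade_in"

definition u :: "real \<Rightarrow> real \<Rightarrow> real \<Rightarrow> complex" where
  "u x y t = f t * wave \<kappa> x + g t * wave \<kappa>' y"

definition drift :: "real \<Rightarrow> real \<Rightarrow> real \<Rightarrow> complex \<times> complex" where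
  "drift x y t =
    (- \<i> * of_real (fade_in' t * exp ((\<kappa>^2 - \<kappa>'^2) * t) / \<kappa>) * wave \<kappa>' y * wave (-\<kappa>) x,
     - \<i> * of_real (fade_out' t * exp ((\<kappa>'^2 - \<kappa>^2) * t) / \<kappa>') * wave \<kappa> x * wave (-\<kappa>') y)"

lemma periodic2_u: "periodic2 u"
  using wave_periodic[of k] wave_periodic[of k'] by (simp add: periodic2_def u_def)

lemma periodic2_drift: "periodic2 drift"
  using wave_periodic[of k] wave_periodic[of k'] wave_periodic[of "-k"] wave_periodic[of "-k'"]
  by (simp add: periodic2_def drift_def)

lemma continuous_on_fade_in'': "continuous_on UNIV fade_in''"
  and continuous_on_fade_out'': "continuous_on UNIV fade_out''"
  unfolding fade_in''_def[abs_def] fade_out''_def[abs_def]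
  by (intro continuous_intros continuous_on_smoothstep''_ramp)+

lemmas f_derivatives = damped_vector_derivatives[OF fade_out_has_real_derivative fade_out'_has_real_derivative,
    where L = "\<kappa>^2", folded f_def]
  and f_second_derivative_continuous = continuous_on_damped_second_derivative[OF fade_out_has_real_derivative
    fade_out'_has_real_derivative continuous_on_fade_out'', where L = "\<kappa>^2", folded f_def]
  and g_derivatives = damped_vector_derivatives[OF fade_in_has_real_derivative fade_in'_has_real_derivative,
    where L = "\<kappa>'^2", folded g_def]
  and g_second_derivative_continuous = continuous_on_damped_second_derivative[OF fade_in_has_real_derivative
    fade_in'_has_real_derivative continuous_on_fade_in'', where L = "\<kappa>'^2", folded g_def]

lemma C2_on_f: "C2_on S f"
  by (rule C2_on_of_vector_derivatives[OF f_derivatives f_second_derivative_continuous])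

lemma C2_on_g: "C2_on S g"
  by (rule C2_on_of_vector_derivatives[OF g_derivatives g_second_derivative_continuous])

lemma norm_iterated_dT_f_le:
  "\<alpha> \<le> 2 \<Longrightarrow> t \<in> {0..T} \<Longrightarrow> norm ((dT T ^^ \<alpha>) f t) \<le> 20 * \<kappa> ^ (2 * \<alpha>) * exp (- (\<kappa>^2) * t)"
  unfolding f_def using fade_bounds kappa_bounds T_pos
  by (intro norm_iterated_dT_damped_le[OF fade_out_has_real_derivative fade_out'_has_real_derivative]) auto

lemma norm_iterated_dT_g_le:
  "\<alpha> \<le> 2 \<Longrightarrow> t \<in> {0..T} \<Longrightarrow> norm ((dT T ^^ \<alpha>) g t) \<le> 20 * \<kappa>' ^ (2 * \<alpha>) * exp (- (\<kappa>'^2) * t)"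
  unfolding g_def using fade_bounds kappa_bounds T_pos
  by (intro norm_iterated_dT_damped_le[OF fade_in_has_real_derivative fade_in'_has_real_derivative]) auto

lemma C2_on_u: "C2_on S (\<lambda>(x, y, t). u x y t)"
proof -
  define Lx Ly Lt :: "(real \<times> real \<times> real) \<Rightarrow>\<^sub>L real"
    where "Lx = Blinfun fst" and "Ly = Blinfun (\<lambda>w. fst (snd w))" and "Lt = Blinfun (\<lambda>w. snd (snd w))"
  have "blinfun_apply Lx = fst" "blinfun_apply Ly = (\<lambda>w. fst (snd w))" "blinfun_apply Lt = (\<lambda>w. snd (snd w))"
    unfolding Lx_def Ly_def Lt_def
    by (auto intro!: bounded_linear_Blinfun_apply bounded_linear_fst
        bounded_linear_compose[OF bounded_linear_fst bounded_linear_snd]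
        bounded_linear_compose[OF bounded_linear_snd bounded_linear_snd])
  then have "(\<lambda>(x, y, t). u x y t) = (\<lambda>w. f (Lt w) * wave \<kappa> (Lx w) + g (Lt w) * wave \<kappa>' (Ly w))"
    by (auto simp: u_def)
  moreover have "C2_on S (\<lambda>w. f (Lt w) * wave c (L w))"
    for c and L :: "(real \<times> real \<times> real) \<Rightarrow>\<^sub>L real"
    by (rule C2_on_mult_blinfun_comp[OF f_derivatives f_second_derivative_continuous
          wave_has_vector_derivative wave'_has_vector_derivative continuous_on_wave''])
  moreover have "C2_on S (\<lambda>w. g (Lt w) * wave c (L w))"
    for c and L :: "(real \<times> real \<times> real) \<Rightarrow>\<^sub>L real"
    by (rule C2_on_mult_blinfun_comp[OF g_derivatives g_second_derivative_continuous
          wave_has_vector_derivative wave'_has_vector_derivative continuous_on_wave''])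
  ultimately show ?thesis
    by (simp add: C2_on_add)
qed

lemma continuous_on_drift: "continuous_on S (\<lambda>(x, y, t). drift x y t)"
proof -
  have "continuous_on UNIV fade_in'" "continuous_on UNIV fade_out'"
    using fade_in'_has_real_derivative fade_out'_has_real_derivative
    by (meson continuous_at_imp_continuous_on DERIV_isCont)+
  moreover have "continuous_on S (\<lambda>w. F (snd (snd w)))" if "continuous_on UNIV F" for F :: "real \<Rightarrow> real"
    by (rule continuous_on_compose2[OF that continuous_on_snd[OF continuous_on_snd[OF continuous_on_id]]]) auto
  ultimately have fades: "continuous_on S (\<lambda>w. fade_in' (snd (snd w)))"
    "continuous_on S (\<lambda>w. fade_out' (snd (snd w)))"
    by blast+
  show ?thesis
    unfolding drift_def wave_def case_prod_beta
    by (intro continuous_intros fades) (use kappa_bounds in auto)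
qed

lemma norm_drift_le:
  assumes "t \<in> {0..T}"
  shows "norm (drift x y t) \<le> 2 + 2 * exp 420"
proof -
  have t: "0 \<le> t" "\<kappa> * t \<le> 7/2"
    using assms kappa_bounds by (auto simp: T_def field_simps)
  have "\<kappa>^2 \<le> \<kappa>'^2"
    using kappa_bounds by (intro power_mono) auto
  then have "exp ((\<kappa>^2 - \<kappa>'^2) * t) \<le> 1"
    using t by (simp add: mult_nonpos_nonneg)
  moreover have "\<bar>fade_in' t\<bar> \<le> 2 * \<kappa>"
    using smoothstep_bounds(3)[of "\<kappa> * t - 1/2"] kappa_bounds by (simp add: fade_in'_def abs_mult)
  ultimately have "\<bar>fade_in' t\<bar> * exp ((\<kappa>^2 - \<kappa>'^2) * t) / \<kappa> \<le> 2 * \<kappa> * 1 / \<kappa>"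
    using kappa_bounds by (intro divide_right_mono mult_mono) auto
  then have first: "norm (fst (drift x y t)) \<le> 2"
    using kappa_bounds by (simp add: drift_def norm_mult norm_divide abs_mult)
  have "(\<kappa>'^2 - \<kappa>^2) * t = (\<kappa>' - \<kappa>) * ((\<kappa>' + \<kappa>) * t)"
    by (simp add: power2_eq_square algebra_simps)
  also have "\<dots> \<le> 10 * (12 * \<kappa> * t)"
    using kappa_bounds t mult_right_mono[of "\<kappa>' + \<kappa>" "12 * \<kappa>" t] by (intro mult_mono) auto
  also have "\<dots> \<le> 420"
    using t by (simp add: algebra_simps)
  finally have "exp ((\<kappa>'^2 - \<kappa>^2) * t) \<le> exp 420"
    by simp
  moreover have "\<bar>fade_out' t\<bar> \<le> 2 * \<kappa>'"
    using fade_bounds(5)[of t] kappa_bounds by simp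
  ultimately have "\<bar>fade_out' t\<bar> * exp ((\<kappa>'^2 - \<kappa>^2) * t) / \<kappa>' \<le> 2 * \<kappa>' * exp 420 / \<kappa>'"
    using kappa_bounds by (intro divide_right_mono mult_mono) auto
  then have second: "norm (snd (drift x y t)) \<le> 2 * exp 420"
    using kappa_bounds by (simp add: drift_def norm_mult norm_divide abs_mult)
  show ?thesis
    using norm_Pair_le[of "fst (drift x y t)" "snd (drift x y t)"] first second by simp
qed

lemma u_initial:
  assumes "t \<in> {0..1 / (2 * \<kappa>)}"
  shows "u x y t = wave \<kappa> x * of_real (exp (- (\<kappa>^2) * t)) \<and> drift x y t = 0"
proof -
  have "\<kappa> * t \<le> 1/2"
    using assms kappa_bounds by (auto simp: field_simps)
  then show ?thesis
    by (simp add: u_def drift_def f_def g_def damped_def fade_in_def fade_in'_def fade_out_def fade_out'_def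
        smoothstep_eq_0 smoothstep'_eq_0 zero_prod_def)
qed

lemma u_final:
  assumes "t \<in> {3 / \<kappa>..T}"
  shows "u x y t = wave \<kappa>' y * of_real (exp (- (\<kappa>'^2) * t)) \<and> drift x y t = 0"
proof -
  have "3 \<le> \<kappa> * t"
    using assms kappa_bounds by (auto simp: field_simps)
  then show ?thesis
    by (simp add: u_def drift_def f_def g_def damped_def fade_in_def fade_in'_def fade_out_def fade_out'_def
        smoothstep_eq_1 smoothstep'_eq_0 zero_prod_def)
qed

lemma pdx_u: "pdx u x y t = f t * (\<i> * \<kappa> * wave \<kappa> x)"
  unfolding u_def[abs_def] pdx_wave[of "\<lambda>y t. f t" \<kappa> "\<lambda>y t. g t * wave \<kappa>' y"] ..

lemma pdy_u: "pdy u x y t = g t * (\<i> * \<kappa>' * wave \<kappa>' y)"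
  unfolding u_def[abs_def] pdy_wave[of "\<lambda>x t. f t * wave \<kappa> x" "\<lambda>x t. g t" \<kappa>'] ..

lemma drift_fst_mult_pdx_u: "fst (drift x y t) * pdx u x y t = damped (\<kappa>'^2) fade_in' t * wave \<kappa>' y"
proof -
  have "fst (drift x y t) * pdx u x y t = (- \<i> * \<i>) * (wave (-\<kappa>) x * wave \<kappa> x) *
      of_real (fade_in' t * exp ((\<kappa>^2 - \<kappa>'^2) * t) / \<kappa> * \<kappa> * (fade_out t * exp (- (\<kappa>^2) * t))) * wave \<kappa>' y"
    by (simp add: drift_def pdx_u f_def damped_def mult_ac)
  also have "\<dots> = damped (\<kappa>'^2) fade_in' t * wave \<kappa>' y"
    unfolding exp_ratio_cancel[OF fade_out_mult_fade_in' kappa_nonzero(1)]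
    by (simp add: wave_uminus_mult damped_def)
  finally show ?thesis .
qed

lemma drift_snd_mult_pdy_u: "snd (drift x y t) * pdy u x y t = damped (\<kappa>^2) fade_out' t * wave \<kappa> x"
proof -
  have "snd (drift x y t) * pdy u x y t = (- \<i> * \<i>) * (wave (-\<kappa>') y * wave \<kappa>' y) *
      of_real (fade_out' t * exp ((\<kappa>'^2 - \<kappa>^2) * t) / \<kappa>' * \<kappa>' * (fade_in t * exp (- (\<kappa>'^2) * t))) * wave \<kappa> x"
    by (simp add: drift_def pdy_u g_def damped_def mult_ac)
  also have "\<dots> = damped (\<kappa>^2) fade_out' t * wave \<kappa> x"
    unfolding exp_ratio_cancel[OF fade_in_mult_fade_out' kappa_nonzero(2)]
    by (simp add: wave_uminus_mult damped_def)
  finally show ?thesis .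
qed

lemma heat_equation:
  assumes "t \<in> {0..T}"
  shows "pdt T u x y t = lap u x y t + fst (drift x y t) * pdx u x y t + snd (drift x y t) * pdy u x y t"
proof -
  have "((\<lambda>s. u x y s) has_vector_derivative
      damped (\<kappa>^2) (\<lambda>s. fade_out' s - \<kappa>^2 * fade_out s) t * wave \<kappa> x +
      damped (\<kappa>'^2) (\<lambda>s. fade_in' s - \<kappa>'^2 * fade_in s) t * wave \<kappa>' y) (at t)"
    unfolding u_def[abs_def] by (intro derivative_intros has_vector_derivative_mult_left f_derivatives g_derivatives)
  then have pdt: "pdt T u x y t =
      damped (\<kappa>^2) (\<lambda>s. fade_out' s - \<kappa>^2 * fade_out s) t * wave \<kappa> x +
      damped (\<kappa>'^2) (\<lambda>s. fade_in' s - \<kappa>'^2 * fade_in s) t * wave \<kappa>' y"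
    unfolding pdt_def using assms T_pos by (auto intro: vector_derivative_at_within_ivl)
  have lap: "lap u x y t = - (of_real (\<kappa>^2) * f t * wave \<kappa> x + of_real (\<kappa>'^2) * g t * wave \<kappa>' y)"
    unfolding u_def[abs_def] by (rule lap_waves)
  show ?thesis
    unfolding pdt lap drift_fst_mult_pdx_u drift_snd_mult_pdy_u by (simp add: f_def g_def damped_def algebra_simps)
qed

end

theorem mainTheorem16:
  shows "\<exists>B0 M :: real. \<forall>k k' :: int. 1 \<le> k \<and> k \<le> k' \<and> k' \<le> k + 10 \<longrightarrow>
   (let T = 7 / (2 * real_of_int k);
        S = {p :: real \<times> real \<times> real. 0 \<le> snd (snd p) \<and> snd (snd p) \<le> T};
        u1 = (\<lambda>x y t. exp (\<i> * of_real (real_of_int k * x)) * of_real (exp (- (real_of_int k)\<^sup>2 * t)));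
        u2 = (\<lambda>x y t. exp (\<i> * of_real (real_of_int k' * y)) * of_real (exp (- (real_of_int k')\<^sup>2 * t)))
    in \<exists>(u :: real \<Rightarrow> real \<Rightarrow> real \<Rightarrow> complex) (B :: real \<Rightarrow> real \<Rightarrow> real \<Rightarrow> complex \<times> complex)
         (f :: real \<Rightarrow> complex) (g :: real \<Rightarrow> complex).
       periodic2 u \<and> periodic2 B \<and>
       C2_on S (\<lambda>(x, y, t). u x y t) \<and>
       continuous_on S (\<lambda>(x, y, t). B x y t) \<and>
       (\<forall>x y t. t \<in> {0..T} \<longrightarrow> norm (B x y t) \<le> B0) \<and>
       (\<forall>x y t. t \<in> {0..T} \<longrightarrow>
          pdt T u x y t = lap u x y t + fst (B x y t) * pdx u x y t + snd (B x y t) * pdy u x y t) \<and>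
       (\<forall>x y t. t \<in> {0..1 / (2 * real_of_int k)} \<longrightarrow> u x y t = u1 x y t \<and> B x y t = 0) \<and>
       (\<forall>x y t. t \<in> {3 / real_of_int k..T} \<longrightarrow> u x y t = u2 x y t \<and> B x y t = 0) \<and>
       C2_on {0..T} f \<and> C2_on {0..T} g \<and>
       (\<forall>x y t. t \<in> {0..T} \<longrightarrow>
          u x y t = f t * exp (\<i> * of_real (real_of_int k * x)) + g t * exp (\<i> * of_real (real_of_int k' * y))) \<and>
       (\<forall>\<alpha>::nat. \<forall>t. \<alpha> \<le> 2 \<and> t \<in> {0..T} \<longrightarrow>
          norm (((dT T) ^^ \<alpha>) f t) \<le> M * (real_of_int k) ^ (2 * \<alpha>) * exp (- (real_of_int k)\<^sup>2 * t) \<and>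
          norm (((dT T) ^^ \<alpha>) g t) \<le> M * (real_of_int k') ^ (2 * \<alpha>) * exp (- (real_of_int k')\<^sup>2 * t)))"
  apply (rule exI[of _ "2 + 2 * exp 420"], rule exI[of _ 20], intro allI impI)
  subgoal premises bounds for k k'
  proof -
    interpret heat_transition k k'
      using bounds by unfold_locales auto
    show ?thesis
      unfolding Let_def T_def[symmetric] wave_def[symmetric]
      apply (rule exI[of _ u], rule exI[of _ drift], rule exI[of _ f], rule exI[of _ g])
      by (intro conjI allI impI periodic2_u periodic2_drift C2_on_u continuous_on_drift norm_drift_le
          heat_equation C2_on_f C2_on_g u_def norm_iterated_dT_f_le norm_iterated_dT_g_le;
          simp add: u_initial u_final)
  qed
  done

end
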